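(* Let $(G,\alpha)$ be an edge-labeled graph with $n$ vertices $v_1,\dots,v_n$ over $\mathbb{Z}/m\mathbb{Z}$, let $1<i\le j\le n$, and let $\bar F^{(i)}=(\bar 0,\dots,\bar 0,\bar f^{(i)}_{v_i},\dots,\bar f^{(i)}_{v_n})\in\mathcal F_i$ be an $i$-th flow-up class. Let $L=\big[\bigcup_{k=1}^{i-1}\{(p^{(j,k)})\}\big]$ be the least common multiple of the greatest common divisors of all $v_k$-trails of $v_j$, over all $k=1,\dots,i-1$. If $L\not\equiv 0 \pmod m$, then $\bar f^{(i)}_{v_j}$ is a multiple of $L+m\mathbb{Z}$ in $\mathbb{Z}/m\mathbb{Z}$.
   Context: Let $m\ge 2$ and $G=(V,E)$ a finite simple connected graph with ordered vertices $v_1,\dots,v_n$. An edge-labeling $\alpha$ assigns to each edge a nonzero ideal of $\mathbb{Z}/m\mathbb{Z}$; each edge $e$ is labeled by the ideal $\alpha(e)=\langle l_e+m\mathbb{Z}\rangle$ generated by the class of a positive integer $l_e$, the integer representative (smallest positive integer of the coset) of the label. A spline on $(G,\alpha)$ is $F=(f_{v_1},\dots,f_{v_n})\in(\mathbb{Z}/m\mathbb{Z})^n$ with $f_{v_a}-f_{v_b}\in\alpha(v_av_b)$ for each edge $v_av_b$. An $i$-th flow-up class is a spline with $f_{v_i}\ne0$ and $f_{v_t}=0$ for $t<i$; $\mathcal F_i$ is the set of these. A trail is a sequence $w_0,e_1,w_1,\dots,e_r,w_r$ of vertices and edges, $e_s=w_{s-1}w_s$, in which no edge is repeated; a $v_k$-trail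 of $v_j$ is a trail from $v_j$ to $v_k$. For such a trail $p^{(j,k)}$, $(p^{(j,k)})$ denotes the greatest common divisor (in $\mathbb{Z}$) of the integer representatives $l_e$ of the edges on it; $\{(p^{(j,k)})\}$ is the set of these values over all $v_k$-trails of $v_j$; $[\,S\,]$ denotes the least common multiple of a finite set $S$ of integers. *)

theory Defs
  imports Main "HOL-Number_Theory.Cong"
begin

text \<open>Vertices are the natural numbers 1..n (vertex v_a is the number a).\<close>

definition simple_graph :: "nat \<Rightarrow> (nat \<Rightarrow> nat \<Rightarrow> bool) \<Rightarrow> bool" where
  "simple_graph n E \<longleftrightarrow>
     (\<forall>a b. E a b \<longrightarrow> a \<in> {1..n} \<and> b \<in> {1..n} \<and> a \<noteq> b \<and> E b a)"

definition graph_connected :: "nat \<Rightarrow> (nat \<Rightarrow> nat \<Rightarrow> bool) \<Rightarrow> bool" where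
  "graph_connected n E \<longleftrightarrow> (\<forall>a\<in>{1..n}. \<forall>b\<in>{1..n}. E\<^sup>*\<^sup>* a b)"

text \<open>An edge labeling by nonzero ideals of Z/mZ, recorded by the smallest positive
  integer representative l of the generating class (so 0 < l < m).\<close>
definition edge_labeling :: "int \<Rightarrow> (nat \<Rightarrow> nat \<Rightarrow> bool) \<Rightarrow> (nat \<Rightarrow> nat \<Rightarrow> int) \<Rightarrow> bool" where
  "edge_labeling m E l \<longleftrightarrow> (\<forall>a b. E a b \<longrightarrow> l a b = l b a \<and> 0 < l a b \<and> l a b < m)"

text \<open>Splines: tuples of residues mod m represented by integers f a (a = 1..n);
  f a - f b must lie in the ideal generated by l a b + mZ.\<close>
definition is_spline :: "int \<Rightarrow> (nat \<Rightarrow> nat \<Rightarrow> bool) \<Rightarrow> (nat \<Rightarrow> nat \<Rightarrow> int) \<Rightarrow> (nat \<Rightarrow> int) \<Rightarrow> bool" where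
  "is_spline m E l f \<longleftrightarrow> (\<forall>a b. E a b \<longrightarrow> (\<exists>c. [f a - f b = c * l a b] (mod m)))"

definition flow_up :: "int \<Rightarrow> (nat \<Rightarrow> nat \<Rightarrow> bool) \<Rightarrow> (nat \<Rightarrow> nat \<Rightarrow> int) \<Rightarrow> nat \<Rightarrow> (nat \<Rightarrow> int) \<Rightarrow> bool" where
  "flow_up m E l i f \<longleftrightarrow> is_spline m E l f \<and> \<not> [f i = 0] (mod m) \<and>
     (\<forall>t. 1 \<le> t \<and> t < i \<longrightarrow> [f t = 0] (mod m))"

definition trail_edges :: "nat list \<Rightarrow> (nat \<times> nat) list" where
  "trail_edges w = zip w (tl w)"

definition is_trail :: "(nat \<Rightarrow> nat \<Rightarrow> bool) \<Rightarrow> nat list \<Rightarrow> bool" where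
  "is_trail E w \<longleftrightarrow> w \<noteq> [] \<and> (\<forall>(a,b)\<in>set (trail_edges w). E a b) \<and>
     distinct (map (\<lambda>(a,b). {a,b}) (trail_edges w))"

definition trail_gcd :: "(nat \<Rightarrow> nat \<Rightarrow> int) \<Rightarrow> nat list \<Rightarrow> int" where
  "trail_gcd l w = Gcd ((\<lambda>(a,b). l a b) ` set (trail_edges w))"

definition trail_gcds :: "(nat \<Rightarrow> nat \<Rightarrow> bool) \<Rightarrow> (nat \<Rightarrow> nat \<Rightarrow> int) \<Rightarrow> nat \<Rightarrow> nat \<Rightarrow> int set" where
  "trail_gcds E l j k = {trail_gcd l w | w. is_trail E w \<and> hd w = j \<and> last w = k}"

end

theory Submission
  imports Defs "HOL-Computational_Algebra.Euclidean_Algorithm"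
begin

text \<open>In \<open>\<int>/m\<int>\<close> the ideal generated by \<open>d + m\<int>\<close> consists of the classes of the
  multiples of \<open>gcd d m\<close>. Along any walk from \<open>v\<^sub>j\<close> to \<open>v\<^sub>k\<close> the spline condition on each
  edge therefore gives \<open>gcd (p) m | f\<^sub>j - f\<^sub>k\<close>, where \<open>(p)\<close> is the gcd of the labels of the
  walk; for \<open>k < i\<close> the flow-up class vanishes at \<open>v\<^sub>k\<close>, so \<open>gcd (p) m | f\<^sub>j\<close>. Since
  \<open>gcd (-) m\<close> distributes over \<open>lcm\<close>, also \<open>gcd L m | f\<^sub>j\<close>, i.e. \<open>f\<^sub>j\<close> lies in the ideal
  generated by \<open>L + m\<int>\<close>.\<close>

lemma cong_multiple_iff_gcd_dvd:
  fixes x d m :: int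
  shows "(\<exists>c. [x = c * d] (mod m)) \<longleftrightarrow> gcd d m dvd x"
proof
  assume "\<exists>c. [x = c * d] (mod m)"
  then obtain c where "[x = c * d] (mod m)" ..
  then have "[x = c * d] (mod gcd d m)"
    by (rule cong_dvd_modulus) simp
  then show "gcd d m dvd x"
    by (simp add: cong_dvd_iff)
next
  assume "gcd d m dvd x"
  then obtain c where "[d * c = x] (mod m)"
    using cong_solve_dvd_int by blast
  then show "\<exists>c. [x = c * d] (mod m)"
    by (metis cong_sym mult.commute)
qed

lemma gcd_Lcm_dvdI:
  fixes S :: "'a :: factorial_semiring_gcd set"
  assumes "finite S" and "\<And>g. g \<in> S \<Longrightarrow> gcd g m dvd x"
  shows "gcd (Lcm S) m dvd x"
  using assms
proof (induction S rule: finite_induct)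
  case empty
  then show ?case by simp
next
  case (insert a S)
  have "gcd (Lcm (insert a S)) m = lcm (gcd a m) (gcd (Lcm S) m)"
    by (simp add: gcd.commute[of _ m] gcd_lcm_distrib)
  with insert show ?case
    by (simp add: lcm_least)
qed

lemma spline_walk_gcd_dvd_diff:
  assumes spline: "is_spline m E l f"
  shows "w \<noteq> [] \<Longrightarrow> \<forall>(a, b) \<in> set (trail_edges w). E a b \<Longrightarrow>
    gcd (trail_gcd l w) m dvd f (hd w) - f (last w)"
proof (induction w rule: induct_list012)
  case 1
  then show ?case by simp
next
  case (2 a)
  then show ?case by simp
next
  case (3 a b w)
  have edges: "trail_edges (a # b # w) = (a, b) # trail_edges (b # w)"
    by (simp add: trail_edges_def)
  let ?g = "trail_gcd l (b # w)"
  have gcd_cons: "trail_gcd l (a # b # w) = gcd (l a b) ?g"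
    by (simp add: trail_gcd_def edges)
  from "3.prems" have "E a b"
    by (simp add: edges)
  with spline obtain c where "[f a - f b = c * l a b] (mod m)"
    unfolding is_spline_def by blast
  then have "gcd (l a b) m dvd f a - f b"
    using cong_multiple_iff_gcd_dvd by blast
  then have head: "gcd (gcd (l a b) ?g) m dvd f a - f b"
    by (rule dvd_trans[rotated]) (rule gcd_mono; simp)
  from "3.IH"(2) "3.prems" have "gcd ?g m dvd f b - f (last (b # w))"
    by (simp add: edges)
  then have tail: "gcd (gcd (l a b) ?g) m dvd f b - f (last (b # w))"
    by (rule dvd_trans[rotated]) (rule gcd_mono; simp)
  from dvd_add[OF head tail] show ?case
    by (simp add: gcd_cons)
qed

lemma finite_trail_gcds:
  assumes "simple_graph n E"
  shows "finite (trail_gcds E l j k)"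
proof -
  define labels where "labels = (\<lambda>(a, b). l a b) ` ({1..n} \<times> {1..n})"
  have "trail_gcds E l j k \<subseteq> Gcd ` Pow labels"
  proof
    fix g
    assume "g \<in> trail_gcds E l j k"
    then obtain w where w: "is_trail E w" and g: "g = trail_gcd l w"
      unfolding trail_gcds_def by blast
    have "E a b" if "(a, b) \<in> set (trail_edges w)" for a b
      using w that unfolding is_trail_def by auto
    with assms have "set (trail_edges w) \<subseteq> {1..n} \<times> {1..n}"
      unfolding simple_graph_def by fastforce
    then have "(\<lambda>(a, b). l a b) ` set (trail_edges w) \<subseteq> labels"
      unfolding labels_def by blast
    then show "g \<in> Gcd ` Pow labels"
      unfolding g trail_gcd_def by blast
  qed
  moreover have "finite labels"
    unfolding labels_def by simp
  ultimately show ?thesis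
    by (meson finite_Pow_iff finite_imageI finite_subset)
qed

lemma flow_up_trail_gcd_dvd:
  assumes "flow_up m E l i f" and "k \<in> {1..<i}" and "g \<in> trail_gcds E l j k"
  shows "gcd g m dvd f j"
proof -
  from assms(3) obtain w where w: "is_trail E w" "hd w = j" "last w = k"
    and g: "g = trail_gcd l w"
    unfolding trail_gcds_def by blast
  from assms(1) have "is_spline m E l f"
    by (simp add: flow_up_def)
  with w have "gcd g m dvd f j - f k"
    using spline_walk_gcd_dvd_diff[of m E l f w] unfolding g is_trail_def by auto
  moreover from assms(1,2) have "m dvd f k"
    by (simp add: flow_up_def cong_0_iff)
  then have "gcd g m dvd f k"
    by (rule dvd_trans[rotated]) simp
  ultimately show ?thesis
    using dvd_add by fastforce
qed

theorem mainTheorem2: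
  fixes m :: int and n i j :: nat and E :: "nat \<Rightarrow> nat \<Rightarrow> bool"
    and l :: "nat \<Rightarrow> nat \<Rightarrow> int" and f :: "nat \<Rightarrow> int"
  assumes "m \<ge> 2"
    and "simple_graph n E" and "graph_connected n E" and "edge_labeling m E l"
    and "1 < i" and "i \<le> j" and "j \<le> n"
    and "flow_up m E l i f"
    and "\<not> [Lcm (\<Union>k\<in>{1..<i}. trail_gcds E l j k) = 0] (mod m)"
  shows "\<exists>c. [f j = c * Lcm (\<Union>k\<in>{1..<i}. trail_gcds E l j k)] (mod m)"
proof -
  let ?S = "\<Union>k\<in>{1..<i}. trail_gcds E l j k"
  have "finite ?S"
    using finite_trail_gcds[OF assms(2)] by blast
  moreover have "gcd g m dvd f j" if "g \<in> ?S" for g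
    using that flow_up_trail_gcd_dvd[OF assms(8)] by blast
  ultimately have "gcd (Lcm ?S) m dvd f j"
    by (rule gcd_Lcm_dvdI)
  then show ?thesis
    using cong_multiple_iff_gcd_dvd by blast
qed

end
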